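(* Let $\mathcal{X},\mathcal{Y}$ be finite alphabets and $P_{XY}$ a joint PMF on $\mathcal{X}\times\mathcal{Y}$ with $P_X$ fully supported. Let $(X^N,Y^N)\sim P_{XY}^{\otimes N}$, $M\in\mathbb{N}$, $\beta>0$, $L=\beta\log M$, $N=ML$ (integer constraints ignored), with fragments $\boldsymbol{X}(i)=X_{(i-1)L+1}^{iL}$. Let $\hat X^N\in\arg\max_{\tilde X^N\in\mathcal{A}_L(X^N)}\mathbb{P}[Y^N\mid\tilde X^N]$ be a maximum-likelihood reconstruction, $\mathcal{A}_L(X^N)=\{(\boldsymbol{X}(\pi(1)),\ldots,\boldsymbol{X}(\pi(M))):\pi\in S_M\}$, with fragments $\hat{\boldsymbol{X}}(i)$. Let $\Delta:\mathcal{X}\times\mathcal{X}\to\mathbb{R}_+$ be a distortion measure, extended to fragments by $\Delta(\tilde{\boldsymbol{x}},\bar{\boldsymbol{x}})=\frac1L\sum_{j\in[L]}\Delta(\tilde x_j,\bar x_j)$; for $\delta>0$ let $\Xi_\delta=\frac1M\sum_{i\in[M]}\mathbb{1}\{\Delta(\boldsymbol{X}(i),\hat{\boldsymbol{X}}(i))\geq\delta\}$ and $\mathsf{FP}(\delta,\xi)=\mathbb{P}[\Xi_\delta\geq\xi]$. Define $$d^*_{P_{Y|X}}(\delta)=\min_{Q_{X_1X_2}\in\mathcal{P}(\mathcal{X}^2):\ \Delta(Q_{X_1X_2})\geq\delta} d_{P_{Y|X}}(Q_{X_1X_2}).$$ Assume $\beta<1/H(P_X)$. If $\xi>H(P_X)/d^*_{P_{Y|X}}(\delta)$,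 then $\mathsf{FP}(\delta,\xi)=o(1)$ as $M\to\infty$.
   Context: $d_{P_{Y|X}}(x_1,x_2)=-\log\sum_{y}\sqrt{P_{Y|X}(y|x_1)P_{Y|X}(y|x_2)}$; for a joint PMF $Q_{X_1X_2}$ on $\mathcal{X}^2$, $d_{P_{Y|X}}(Q_{X_1X_2})=\sum_{x_1,x_2}Q_{X_1X_2}(x_1,x_2)d_{P_{Y|X}}(x_1,x_2)$ and $\Delta(Q_{X_1X_2})=\sum_{x_1,x_2}Q_{X_1X_2}(x_1,x_2)\Delta(x_1,x_2)$. $H(P_X)$ is the Shannon entropy (natural logarithms); $\mathcal{P}(\mathcal{X}^2)$ is the probability simplex on $\mathcal{X}^2$. *)

theory Defs
  imports Complex_Main "HOL-Library.Extended_Real" "HOL-Combinatorics.Permutations"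
begin

definition PX :: "('x::finite \<times> 'y::finite \<Rightarrow> real) \<Rightarrow> 'x \<Rightarrow> real" where
  "PX P x = (\<Sum>y\<in>UNIV. P (x, y))"

definition Wc :: "('x::finite \<times> 'y::finite \<Rightarrow> real) \<Rightarrow> 'y \<Rightarrow> 'x \<Rightarrow> real" where
  "Wc P y x = P (x, y) / PX P x"

definition entropyX :: "('x::finite \<times> 'y::finite \<Rightarrow> real) \<Rightarrow> real" where
  "entropyX P = - (\<Sum>x\<in>UNIV. PX P x * ln (PX P x))"

definition bhatt :: "('x::finite \<times> 'y::finite \<Rightarrow> real) \<Rightarrow> 'x \<Rightarrow> 'x \<Rightarrow> real" where
  "bhatt P x1 x2 = (\<Sum>y\<in>UNIV. sqrt (Wc P y x1 * Wc P y x2))"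

definition dpair :: "('x::finite \<times> 'y::finite \<Rightarrow> real) \<Rightarrow> 'x \<Rightarrow> 'x \<Rightarrow> ereal" where
  "dpair P x1 x2 = (if bhatt P x1 x2 = 0 then \<infinity> else ereal (- ln (bhatt P x1 x2)))"

definition is_pmf :: "('a::finite \<Rightarrow> real) \<Rightarrow> bool" where
  "is_pmf Q \<longleftrightarrow> (\<forall>z. 0 \<le> Q z) \<and> sum Q UNIV = 1"

definition dQ :: "('x::finite \<times> 'y::finite \<Rightarrow> real) \<Rightarrow> ('x \<times> 'x \<Rightarrow> real) \<Rightarrow> ereal" where
  "dQ P Q = (\<Sum>z\<in>UNIV. ereal (Q z) * dpair P (fst z) (snd z))"

definition DeltaQ :: "('x \<Rightarrow> 'x \<Rightarrow> real) \<Rightarrow> ('x::finite \<times> 'x \<Rightarrow> real) \<Rightarrow> real" where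
  "DeltaQ \<Delta> Q = (\<Sum>z\<in>UNIV. Q z * \<Delta> (fst z) (snd z))"

(* d^*_{P_{Y|X}}(delta) = min over Q in P(X^2) with Delta(Q) >= delta of d(Q)
   (infimum in the extended reals; +infinity if the constraint set is empty) *)
definition dstar :: "('x::finite \<times> 'y::finite \<Rightarrow> real) \<Rightarrow> ('x \<Rightarrow> 'x \<Rightarrow> real) \<Rightarrow> real \<Rightarrow> ereal" where
  "dstar P \<Delta> \<delta> = (INF Q \<in> {Q. is_pmf Q \<and> DeltaQ \<Delta> Q \<ge> \<delta>}. dQ P Q)"

definition fraglen :: "real \<Rightarrow> nat \<Rightarrow> nat" where
  "fraglen \<beta> M = nat \<lceil>\<beta> * ln (real M)\<rceil>"

(* i-th fragment (0-indexed): X_{iL+1}^{(i+1)L} *)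
definition frag :: "nat \<Rightarrow> 'a list \<Rightarrow> nat \<Rightarrow> 'a list" where
  "frag L xs i = take L (drop (i * L) xs)"

definition arrange :: "nat \<Rightarrow> nat \<Rightarrow> 'a list \<Rightarrow> (nat \<Rightarrow> nat) \<Rightarrow> 'a list" where
  "arrange L M xs \<pi> = concat (map (\<lambda>i. frag L xs (\<pi> i)) [0..<M])"

definition lik :: "('x::finite \<times> 'y::finite \<Rightarrow> real) \<Rightarrow> 'x list \<Rightarrow> 'y list \<Rightarrow> real" where
  "lik P xs ys = (\<Prod>k<length xs. Wc P (ys ! k) (xs ! k))"

definition is_ML :: "('x::finite \<times> 'y::finite \<Rightarrow> real) \<Rightarrow> nat \<Rightarrow> nat \<Rightarrow> 'x list \<Rightarrow> 'y list \<Rightarrow> (nat \<Rightarrow> nat) \<Rightarrow> bool" where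
  "is_ML P L M xs ys \<pi> \<longleftrightarrow> \<pi> permutes {..<M} \<and>
     (\<forall>\<sigma>. \<sigma> permutes {..<M} \<longrightarrow> lik P (arrange L M xs \<sigma>) ys \<le> lik P (arrange L M xs \<pi>) ys)"

definition frag_dist :: "('x \<Rightarrow> 'x \<Rightarrow> real) \<Rightarrow> nat \<Rightarrow> 'x list \<Rightarrow> 'x list \<Rightarrow> real" where
  "frag_dist \<Delta> L a b = (1 / real L) * (\<Sum>j<L. \<Delta> (a ! j) (b ! j))"

(* Xi_delta, with hat X(i) = X(pi(i)) *)
definition Xi :: "('x \<Rightarrow> 'x \<Rightarrow> real) \<Rightarrow> real \<Rightarrow> nat \<Rightarrow> nat \<Rightarrow> 'x list \<Rightarrow> (nat \<Rightarrow> nat) \<Rightarrow> real" where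
  "Xi \<Delta> \<delta> L M xs \<pi> =
     real (card {i\<in>{..<M}. frag_dist \<Delta> L (frag L xs i) (frag L xs (\<pi> i)) \<ge> \<delta>}) / real M"

(* FP(delta, xi) = P[Xi_delta >= xi] under (X^N,Y^N) ~ P_XY^{\<otimes>N}, N = M L,
   where sel M xs ys is the permutation chosen by the ML reconstruction *)
definition FP :: "('x::finite \<times> 'y::finite \<Rightarrow> real) \<Rightarrow> ('x \<Rightarrow> 'x \<Rightarrow> real) \<Rightarrow> real \<Rightarrow> real \<Rightarrow> real
     \<Rightarrow> (nat \<Rightarrow> 'x list \<Rightarrow> 'y list \<Rightarrow> nat \<Rightarrow> nat) \<Rightarrow> nat \<Rightarrow> real" where
  "FP P \<Delta> \<beta> \<delta> \<xi> sel M =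
     (let L = fraglen \<beta> M; N = M * L in
      \<Sum>(xs, ys) \<in> {(xs, ys). length xs = N \<and> length ys = N}.
         (\<Prod>k<N. P (xs ! k, ys ! k)) * (if Xi \<Delta> \<delta> L M xs (sel M xs ys) \<ge> \<xi> then 1 else 0))"

end

theory Submission
  imports Defs
begin

text \<open>
  Fix the source sequence \<open>xs\<close> and call an arrangement of its fragments bad if at least
  \<open>\<xi> M\<close> of its fragments are at distortion \<open>\<ge> \<delta>\<close> from the corresponding fragments of
  \<open>xs\<close>. On the error event the ML arrangement is bad and at least as likely as \<open>xs\<close> itself,
  so \<open>P(ys | xs) \<le> \<Sum>\<^sub>z sqrt (P(ys | xs) P(ys | z))\<close> over bad \<open>z\<close>. Summing over \<open>ys\<close> turns
  each term into a product of Bhattacharyya coefficients; on a distorted fragment the joint type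
  of the two fragments is feasible for \<open>d\<^sup>*\<close>, so that fragment contributes at most
  \<open>exp (- L D)\<close> for any \<open>D \<le> d\<^sup>*\<close>. All arrangements of \<open>xs\<close> have the same probability
  \<open>p = P\<^sub>X\<^sup>N(xs)\<close>, so there are at most \<open>1 / p\<close> of them, and the joint error probability at
  \<open>xs\<close> is at most \<open>min p (exp (- \<xi> N D)) \<le> p powr (1 - s) * exp (- s \<xi> N D)\<close>. Summing over
  \<open>xs\<close> gives \<open>exp (N (ln (\<Sum>\<^sub>x P\<^sub>X(x) powr (1 - s)) - s \<xi> D))\<close>; the function
  \<open>s \<mapsto> ln (\<Sum>\<^sub>x P\<^sub>X(x) powr (1 - s))\<close> vanishes at \<open>0\<close> with slope \<open>H(P\<^sub>X) < \<xi> D\<close>, so the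
  exponent is negative for small \<open>s > 0\<close>.
\<close>

lemma sum_lists_length_prod:
  fixes f :: "nat \<Rightarrow> 'a::finite \<Rightarrow> 'b::comm_semiring_1"
  shows "(\<Sum>xs\<in>{xs. length xs = n}. \<Prod>k<n. f k (xs ! k)) = (\<Prod>k<n. \<Sum>a\<in>UNIV. f k a)"
proof (induction n arbitrary: f)
  case 0
  have "{xs::'a list. length xs = 0} = {[]}" by auto
  then show ?case by simp
next
  case (Suc n)
  have eq: "{xs::'a list. length xs = Suc n} = (\<lambda>(a,xs). a#xs) ` (UNIV \<times> {xs. length xs = n})"
    by (auto simp: length_Suc_conv)
  have inj: "inj_on (\<lambda>(a,xs). a#(xs::'a list)) (UNIV \<times> {xs. length xs = n})"
    by (auto simp: inj_on_def)
  have "(\<Sum>xs\<in>{xs. length xs = Suc n}. \<Prod>k<Suc n. f k (xs ! k))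
      = (\<Sum>(a,xs)\<in>UNIV \<times> {xs. length xs = n}. \<Prod>k<Suc n. f k ((a#xs) ! k))"
    unfolding eq by (subst sum.reindex[OF inj]) (simp add: case_prod_unfold)
  also have "\<dots> = (\<Sum>a\<in>UNIV. \<Sum>xs\<in>{xs. length xs = n}. f 0 a * (\<Prod>k<n. f (Suc k) (xs ! k)))"
    by (subst sum.cartesian_product[symmetric])
      (simp only: prod.lessThan_Suc_shift nth_Cons_0 nth_Cons_Suc)
  also have "\<dots> = (\<Sum>a\<in>UNIV. f 0 a * (\<Prod>k<n. \<Sum>b\<in>UNIV. f (Suc k) b))"
    by (simp add: sum_distrib_left[symmetric] Suc.IH[of "\<lambda>k. f (Suc k)"])
  also have "\<dots> = (\<Prod>k<Suc n. \<Sum>a\<in>UNIV. f k a)"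
    by (simp only: prod.lessThan_Suc_shift sum_distrib_right)
  finally show ?case .
qed

lemma real_sqrt_prod: "finite A \<Longrightarrow> sqrt (prod f A) = (\<Prod>i\<in>A. sqrt (f i))"
  by (induction A rule: finite_induct) (simp_all add: real_sqrt_mult)

lemma prod_lessThan_mult_blocks:
  fixes g :: "nat \<Rightarrow> 'a::comm_monoid_mult"
  shows "(\<Prod>k<M * L. g k) = (\<Prod>i<M. \<Prod>j<L. g (i * L + j))"
proof -
  have "(\<Prod>k<M * L. g k) = (\<Prod>i<M. prod g {i * L..<i * L + L})"
    by (rule prod.nat_group[symmetric])
  also have "\<dots> = (\<Prod>i<M. \<Prod>j<L. g (i * L + j))"
  proof (rule prod.cong[OF refl])
    fix i
    show "prod g {i * L..<i * L + L} = (\<Prod>j<L. g (i * L + j))"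
      by (subst prod.atLeastLessThan_shift_0) (simp add: atLeast0LessThan comp_def)
  qed
  finally show ?thesis .
qed

lemma min_le_powr_mult_powr:
  fixes a b s :: real
  assumes "0 < a" "0 < b" "0 \<le> s" "s \<le> 1"
  shows "min a b \<le> a powr (1 - s) * b powr s"
proof -
  have "min a b = min a b powr (1 - s) * min a b powr s"
    using assms by (simp add: powr_add[symmetric])
  also have "\<dots> \<le> a powr (1 - s) * b powr s"
    using assms by (intro mult_mono powr_mono2) auto
  finally show ?thesis .
qed

lemma prod_le_powr_if_many_small:
  fixes B :: "nat \<Rightarrow> real"
  assumes "\<And>i. 0 \<le> B i" "\<And>i. B i \<le> 1" "\<And>i. i \<in> S \<Longrightarrow> B i \<le> e"
    and "S \<subseteq> {..<M}" "0 < e" "e \<le> 1" "c \<le> real (card S)"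
  shows "(\<Prod>i<M. B i) \<le> e powr c"
proof -
  have "(\<Prod>i<M. B i) = (\<Prod>i\<in>S. B i) * (\<Prod>i\<in>{..<M} - S. B i)"
    using prod.subset_diff[OF assms(4)] by (simp add: mult.commute)
  also have "\<dots> \<le> (\<Prod>i\<in>S. B i)"
    by (intro mult_left_le prod_le_1 prod_nonneg) (use assms in auto)
  also have "\<dots> \<le> e ^ card S"
    using prod_mono[of S B "\<lambda>_. e"] assms by auto
  also have "\<dots> \<le> e powr c"
    using assms by (auto simp: powr_realpow[symmetric] intro: powr_mono')
  finally show ?thesis .
qed

lemma eventually_less_slope_at_right:
  fixes f :: "real \<Rightarrow> real"
  assumes "(f has_real_derivative f') (at 0)" "f 0 = 0" "f' < K"
  shows "\<forall>\<^sub>F s in at_right 0. f s < s * K"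
proof -
  have "((\<lambda>h. f h / h) \<longlongrightarrow> f') (at 0)"
    using assms(1,2) by (simp add: DERIV_def)
  then have "\<forall>\<^sub>F h in at_right 0. f h / h < K"
    using assms(3) by (auto dest: order_tendstoD(2) simp: eventually_at_split)
  then show ?thesis
    using eventually_at_right_less[of "0::real"]
    by eventually_elim (simp add: divide_less_eq mult.commute)
qed

lemma renyi_sum_has_derivative:
  fixes p :: "'a::finite \<Rightarrow> real"
  assumes "\<And>x. 0 < p x" "sum p UNIV = 1"
  shows "((\<lambda>s. ln (\<Sum>x\<in>UNIV. p x powr (1 - s))) has_real_derivative
           - (\<Sum>x\<in>UNIV. p x * ln (p x))) (at 0)"
  using assms by (auto intro!: derivative_eq_intros simp: sum_negf abs_of_pos mult.commute)

lemma ereal_less_mult_obtains_real: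
  assumes "ereal a < ereal b * d" "0 \<le> a" "0 < b"
  obtains D where "0 \<le> D" "ereal D \<le> d" "a < b * D"
proof (cases d)
  case (real r)
  then have "a < b * r" using assms(1) by simp
  moreover from this have "0 \<le> r"
    using assms(2,3) mult_pos_neg[of b r] by (cases "0 \<le> r") auto
  ultimately show ?thesis using that real by auto
next
  case PInf
  have "a < b * ((a + 1) / b)" using assms(3) by simp
  moreover have "0 \<le> (a + 1) / b" using assms(2,3) by simp
  ultimately show ?thesis using that PInf by auto
next
  case MInf
  then show ?thesis using assms by simp
qed

lemma length_frag: "length xs = M * L \<Longrightarrow> i < M \<Longrightarrow> length (frag L xs i) = L"
proof -
  assume "length xs = M * L" "i < M"
  moreover from \<open>i < M\<close> have "i * L + L \<le> M * L"
    by (metis add.commute mult_Suc less_eq_Suc_le mult_le_mono1)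
  ultimately show ?thesis by (simp add: frag_def)
qed

lemma nth_frag:
  "length xs = M * L \<Longrightarrow> i < M \<Longrightarrow> j < L \<Longrightarrow> frag L xs i ! j = xs ! (i * L + j)"
  using length_frag[of xs M L i] by (simp add: frag_def add.commute)

lemma frag_concat:
  assumes "\<forall>l\<in>set ls. length l = L" "i < length ls"
  shows "frag L (concat ls) i = ls ! i"
  using assms
proof (induction ls arbitrary: i)
  case Nil
  then show ?case by simp
next
  case (Cons l ls)
  then show ?case
    by (cases i) (simp_all add: frag_def add.commute)
qed

lemma permutes_lessThan_less: "\<sigma> permutes {..<M} \<Longrightarrow> i < M \<Longrightarrow> \<sigma> i < M"
  using permutes_in_image[of \<sigma> "{..<M}" i] by simp

lemma frag_arrange:
  assumes "length xs = M * L" "\<sigma> permutes {..<M}" "i < M"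
  shows "frag L (arrange L M xs \<sigma>) i = frag L xs (\<sigma> i)"
  unfolding arrange_def
  using assms by (subst frag_concat) (auto intro!: length_frag simp: permutes_lessThan_less)

lemma length_arrange:
  assumes "length xs = M * L" "\<sigma> permutes {..<M}"
  shows "length (arrange L M xs \<sigma>) = M * L"
proof -
  have "length (arrange L M xs \<sigma>) = (\<Sum>i\<leftarrow>[0..<M]. length (frag L xs (\<sigma> i)))"
    unfolding arrange_def by (simp add: length_concat comp_def)
  also have "\<dots> = (\<Sum>i\<leftarrow>[0..<M]. L)"
    using assms by (intro arg_cong[where f = sum_list] map_cong)
      (auto intro!: length_frag simp: permutes_lessThan_less)
  finally show ?thesis by (simp add: sum_list_triv)
qed

lemma nth_arrange:
  assumes "length xs = M * L" "\<sigma> permutes {..<M}" "i < M" "j < L"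
  shows "arrange L M xs \<sigma> ! (i * L + j) = xs ! (\<sigma> i * L + j)"
  using nth_frag[OF length_arrange[OF assms(1,2)] assms(3,4), symmetric]
    frag_arrange[OF assms(1-3)] nth_frag[OF assms(1) permutes_lessThan_less[OF assms(2,3)] assms(4)]
  by simp

lemma concat_frags: "length xs = M * L \<Longrightarrow> concat (map (frag L xs) [0..<M]) = xs"
proof (induction M arbitrary: xs)
  case 0
  then show ?case by simp
next
  case (Suc M)
  have "map (frag L xs) [0..<M] = map (frag L (take (M * L) xs)) [0..<M]"
  proof (rule map_cong[OF refl])
    fix i assume "i \<in> set [0..<M]"
    then have "i * L + L \<le> M * L"
      by (simp add: add.commute mult_Suc[symmetric] del: mult_Suc)
    then show "frag L xs i = frag L (take (M * L) xs) i"
      by (simp add: frag_def take_drop min_def add.commute)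
  qed
  then have "concat (map (frag L xs) [0..<M]) = take (M * L) xs"
    using Suc.IH[of "take (M * L) xs"] Suc.prems by (simp only:) simp
  then show ?case using Suc.prems by (simp add: frag_def[of L xs M])
qed

lemma arrange_id: "length xs = M * L \<Longrightarrow> arrange L M xs id = xs"
  unfolding arrange_def using concat_frags by simp

definition arrangements :: "nat \<Rightarrow> nat \<Rightarrow> 'a list \<Rightarrow> 'a list set" where
  "arrangements L M xs = arrange L M xs ` {\<sigma>. \<sigma> permutes {..<M}}"

lemma finite_arrangements: "finite (arrangements L M xs)"
  unfolding arrangements_def by (intro finite_imageI finite_permutations) simp

lemma length_arrangements:
  "length xs = M * L \<Longrightarrow> z \<in> arrangements L M xs \<Longrightarrow> length z = M * L"
  unfolding arrangements_def using length_arrange by auto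

definition bad_frags ::
    "('a \<Rightarrow> 'a \<Rightarrow> real) \<Rightarrow> real \<Rightarrow> nat \<Rightarrow> nat \<Rightarrow> 'a list \<Rightarrow> 'a list \<Rightarrow> nat set"
  where "bad_frags \<Delta> \<delta> L M xs z = {i\<in>{..<M}. \<delta> \<le> frag_dist \<Delta> L (frag L xs i) (frag L z i)}"

lemma Xi_eq_card_bad_frags:
  assumes "length xs = M * L" "\<sigma> permutes {..<M}"
  shows "Xi \<Delta> \<delta> L M xs \<sigma> = real (card (bad_frags \<Delta> \<delta> L M xs (arrange L M xs \<sigma>))) / real M"
proof -
  have "bad_frags \<Delta> \<delta> L M xs (arrange L M xs \<sigma>)
      = {i\<in>{..<M}. \<delta> \<le> frag_dist \<Delta> L (frag L xs i) (frag L xs (\<sigma> i))}"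
    unfolding bad_frags_def using frag_arrange[OF assms] by auto
  then show ?thesis unfolding Xi_def by simp
qed

definition bad_arrangements ::
    "('a \<Rightarrow> 'a \<Rightarrow> real) \<Rightarrow> real \<Rightarrow> real \<Rightarrow> nat \<Rightarrow> nat \<Rightarrow> 'a list \<Rightarrow> 'a list set"
  where "bad_arrangements \<Delta> \<delta> \<xi> L M xs =
    {z\<in>arrangements L M xs. \<xi> * M \<le> card (bad_frags \<Delta> \<delta> L M xs z)}"

lemma finite_bad_arrangements: "finite (bad_arrangements \<Delta> \<delta> \<xi> L M xs)"
  unfolding bad_arrangements_def by (simp add: finite_arrangements)

definition joint_type :: "nat \<Rightarrow> 'a list \<Rightarrow> 'a list \<Rightarrow> 'a \<times> 'a \<Rightarrow> real" where
  "joint_type L a b z = real (card {j\<in>{..<L}. (a ! j, b ! j) = z}) / real L"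

lemma sum_joint_type_mult:
  fixes h :: "'a::finite \<times> 'a \<Rightarrow> real"
  shows "(\<Sum>z\<in>UNIV. joint_type L a b z * h z) = (\<Sum>j<L. h (a ! j, b ! j)) / real L"
proof -
  have "(\<Sum>z\<in>UNIV. real (card {j\<in>{..<L}. (a ! j, b ! j) = z}) * h z)
      = (\<Sum>z\<in>UNIV. \<Sum>j\<in>{j\<in>{..<L}. (a ! j, b ! j) = z}. h (a ! j, b ! j))"
    by (intro sum.cong refl) simp
  also have "\<dots> = (\<Sum>j<L. h (a ! j, b ! j))"
    by (rule sum.group) auto
  finally show ?thesis
    unfolding joint_type_def by (simp add: sum_divide_distrib[symmetric])
qed

lemma is_pmf_joint_type: "0 < L \<Longrightarrow> is_pmf (joint_type L a b)"
  using sum_joint_type_mult[of L a b "\<lambda>_. 1"] by (simp add: is_pmf_def joint_type_def)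

lemma DeltaQ_joint_type: "DeltaQ \<Delta> (joint_type L a b) = frag_dist \<Delta> L a b"
  using sum_joint_type_mult[of L a b "\<lambda>z. \<Delta> (fst z) (snd z)"]
  by (simp add: DeltaQ_def frag_dist_def)

locale channel =
  fixes P :: "'x::finite \<times> 'y::finite \<Rightarrow> real"
  assumes P_nonneg: "\<And>z. 0 \<le> P z"
    and P_sum: "(\<Sum>z\<in>UNIV. P z) = 1"
    and PX_pos: "\<And>x. 0 < PX P x"
begin

lemma PX_sum: "(\<Sum>x\<in>UNIV. PX P x) = 1"
  using P_sum unfolding PX_def
  by (simp add: sum.cartesian_product UNIV_Times_UNIV[symmetric] del: UNIV_Times_UNIV)

lemma PX_le_1: "PX P x \<le> 1"
  using member_le_sum[of x UNIV "PX P"] PX_pos PX_sum by (simp add: less_imp_le)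

lemma entropyX_nonneg: "0 \<le> entropyX P"
  using PX_pos PX_le_1
  by (auto simp: entropyX_def sum_nonpos mult_nonneg_nonpos less_imp_le)

lemma Wc_nonneg: "0 \<le> Wc P y x"
  unfolding Wc_def using P_nonneg PX_pos by (simp add: less_imp_le)

lemma sum_Wc: "(\<Sum>y\<in>UNIV. Wc P y x) = 1"
  unfolding Wc_def using PX_pos[of x] by (simp add: sum_divide_distrib[symmetric] PX_def)

lemma P_eq_PX_mult_Wc: "P (x, y) = PX P x * Wc P y x"
  unfolding Wc_def using PX_pos[of x] by simp

lemma bhatt_nonneg: "0 \<le> bhatt P a b"
  unfolding bhatt_def by (rule sum_nonneg) (simp add: Wc_nonneg)

lemma bhatt_le_1: "bhatt P a b \<le> 1"
proof -
  have "bhatt P a b \<le> (\<Sum>y\<in>UNIV. (Wc P y a + Wc P y b) / 2)"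
    unfolding bhatt_def
    by (intro sum_mono) (use arith_geo_mean_sqrt Wc_nonneg in auto)
  also have "\<dots> = 1"
    using sum_Wc[of a] sum_Wc[of b] by (simp add: sum_divide_distrib[symmetric] sum.distrib)
  finally show ?thesis .
qed

lemma dQ_joint_type:
  assumes "\<And>j. j < L \<Longrightarrow> 0 < bhatt P (a ! j) (b ! j)"
  shows "dQ P (joint_type L a b) = ereal ((\<Sum>j<L. - ln (bhatt P (a ! j) (b ! j))) / real L)"
proof -
  have "ereal (joint_type L a b z) * dpair P (fst z) (snd z)
      = ereal (joint_type L a b z * - ln (bhatt P (fst z) (snd z)))" for z
  proof (cases "joint_type L a b z = 0")
    case True
    \<comment> \<open>\<open>dpair\<close> may be \<open>\<infinity>\<close> here, but \<open>0 * \<infinity> = 0\<close> in \<open>ereal\<close>\<close>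
    then show ?thesis by (simp add: zero_ereal_def[symmetric])
  next
    case False
    then obtain j where "j < L" "(a ! j, b ! j) = z"
      unfolding joint_type_def by fastforce
    then have "0 < bhatt P (fst z) (snd z)" using assms by auto
    then show ?thesis by (simp add: dpair_def)
  qed
  then show ?thesis
    using sum_joint_type_mult[of L a b "\<lambda>z. - ln (bhatt P (fst z) (snd z))"]
    by (simp add: dQ_def)
qed

lemma prod_bhatt_le_exp:
  assumes "0 < L" "ereal D \<le> dstar P \<Delta> \<delta>" "\<delta> \<le> frag_dist \<Delta> L a b"
  shows "(\<Prod>j<L. bhatt P (a ! j) (b ! j)) \<le> exp (- real L * D)"
proof (cases "\<exists>j<L. bhatt P (a ! j) (b ! j) = 0")
  case True
  then have "(\<Prod>j<L. bhatt P (a ! j) (b ! j)) = 0" by (auto simp: prod_zero_iff)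
  then show ?thesis by (metis exp_ge_zero)
next
  case False
  then have pos: "\<And>j. j < L \<Longrightarrow> 0 < bhatt P (a ! j) (b ! j)"
    using bhatt_nonneg by (metis less_eq_real_def)
  have "dstar P \<Delta> \<delta> \<le> dQ P (joint_type L a b)"
    unfolding dstar_def using assms(1,3)
    by (intro INF_lower) (simp add: is_pmf_joint_type DeltaQ_joint_type)
  then have "dstar P \<Delta> \<delta> \<le> ereal ((\<Sum>j<L. - ln (bhatt P (a ! j) (b ! j))) / real L)"
    by (simp add: dQ_joint_type pos)
  with assms(2) have "D \<le> (\<Sum>j<L. - ln (bhatt P (a ! j) (b ! j))) / real L"
    by (meson ereal_less_eq(3) order_trans)
  with assms(1) have "(\<Sum>j<L. ln (bhatt P (a ! j) (b ! j))) \<le> - real L * D"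
    by (simp add: sum_negf field_simps)
  moreover have "exp (\<Sum>j<L. ln (bhatt P (a ! j) (b ! j))) = (\<Prod>j<L. bhatt P (a ! j) (b ! j))"
    by (simp add: exp_sum pos)
  ultimately show ?thesis by (metis exp_le_cancel_iff)
qed

definition PXs :: "'x list \<Rightarrow> real" where
  "PXs xs = (\<Prod>k<length xs. PX P (xs ! k))"

lemma PXs_pos: "0 < PXs xs"
  unfolding PXs_def by (rule prod_pos) (simp add: PX_pos)

lemma sum_PXs_powr: "(\<Sum>xs\<in>{xs. length xs = n}. PXs xs powr r) = (\<Sum>x\<in>UNIV. PX P x powr r) ^ n"
proof -
  have "(\<Sum>xs\<in>{xs. length xs = n}. PXs xs powr r)
      = (\<Sum>xs\<in>{xs. length xs = n}. \<Prod>k<n. PX P (xs ! k) powr r)"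
    unfolding PXs_def by (intro sum.cong refl) (simp add: prod_powr_distrib)
  also have "\<dots> = (\<Sum>x\<in>UNIV. PX P x powr r) ^ n"
    by (subst sum_lists_length_prod[of "\<lambda>k x. PX P x powr r"]) simp
  finally show ?thesis .
qed

lemma sum_PXs: "(\<Sum>xs\<in>{xs. length xs = n}. PXs xs) = 1"
  using sum_PXs_powr[where n = n and r = 1] PXs_pos PX_pos by (simp add: PX_sum abs_of_pos)

lemma PXs_arrange:
  assumes "length xs = M * L" "\<sigma> permutes {..<M}"
  shows "PXs (arrange L M xs \<sigma>) = PXs xs"
proof -
  define G where "G i = (\<Prod>j<L. PX P (xs ! (i * L + j)))" for i
  have "PXs (arrange L M xs \<sigma>) = (\<Prod>i<M. \<Prod>j<L. PX P (arrange L M xs \<sigma> ! (i * L + j)))"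
    unfolding PXs_def length_arrange[OF assms] by (rule prod_lessThan_mult_blocks)
  also have "\<dots> = (\<Prod>i<M. G (\<sigma> i))"
    unfolding G_def using nth_arrange[OF assms] by simp
  also have "\<dots> = (\<Prod>i<M. G i)"
    using prod.permute[OF assms(2), of G] by (simp add: comp_def)
  also have "\<dots> = PXs xs"
    unfolding G_def PXs_def assms(1) by (rule prod_lessThan_mult_blocks[symmetric])
  finally show ?thesis .
qed

lemma card_mult_PXs_le_1:
  assumes "length xs = M * L" "A \<subseteq> arrangements L M xs"
  shows "real (card A) * PXs xs \<le> 1"
proof -
  have "(\<Sum>z\<in>A. PXs z) = (\<Sum>z\<in>A. PXs xs)"
    using assms by (intro sum.cong refl) (auto simp: arrangements_def PXs_arrange)
  then have "real (card A) * PXs xs = (\<Sum>z\<in>A. PXs z)" by simp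
  also have "\<dots> \<le> (\<Sum>z\<in>{z. length z = M * L}. PXs z)"
    using assms length_arrangements[OF assms(1)] PXs_pos finite_lists_length_eq[of "UNIV :: 'x set"]
    by (intro sum_mono2) (auto simp: less_imp_le)
  also have "\<dots> = 1" by (rule sum_PXs)
  finally show ?thesis .
qed

lemma lik_nonneg: "0 \<le> lik P xs ys"
  unfolding lik_def by (rule prod_nonneg) (simp add: Wc_nonneg)

lemma sum_lik: "(\<Sum>ys\<in>{ys. length ys = length xs}. lik P xs ys) = 1"
  unfolding lik_def by (simp add: sum_lists_length_prod[of "\<lambda>k y. Wc P y (xs ! k)"] sum_Wc)

lemma sum_sqrt_lik_mult:
  assumes "length z = length xs"
  shows "(\<Sum>ys\<in>{ys. length ys = length xs}. sqrt (lik P xs ys * lik P z ys))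
     = (\<Prod>k<length xs. bhatt P (xs ! k) (z ! k))"
proof -
  have "(\<Sum>ys\<in>{ys. length ys = length xs}. sqrt (lik P xs ys * lik P z ys))
    = (\<Sum>ys\<in>{ys. length ys = length xs}.
         \<Prod>k<length xs. sqrt (Wc P (ys ! k) (xs ! k) * Wc P (ys ! k) (z ! k)))"
    unfolding lik_def assms by (simp add: prod.distrib[symmetric] real_sqrt_prod)
  also have "\<dots> = (\<Prod>k<length xs. bhatt P (xs ! k) (z ! k))"
    by (subst sum_lists_length_prod) (simp add: bhatt_def)
  finally show ?thesis .
qed

lemma sum_sqrt_lik_mult_le_exp:
  assumes "length xs = M * L" "length z = M * L" "0 < L" "0 \<le> D" "ereal D \<le> dstar P \<Delta> \<delta>"
    and "c \<le> real (card (bad_frags \<Delta> \<delta> L M xs z))"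
  shows "(\<Sum>ys\<in>{ys. length ys = M * L}. sqrt (lik P xs ys * lik P z ys)) \<le> exp (- (c * L * D))"
proof -
  define B where "B i = (\<Prod>j<L. bhatt P (frag L xs i ! j) (frag L z i ! j))" for i
  have "(\<Sum>ys\<in>{ys. length ys = M * L}. sqrt (lik P xs ys * lik P z ys))
      = (\<Prod>k<M * L. bhatt P (xs ! k) (z ! k))"
    using sum_sqrt_lik_mult[of z xs] assms(1,2) by simp
  also have "\<dots> = (\<Prod>i<M. B i)"
    unfolding prod_lessThan_mult_blocks B_def using nth_frag[OF assms(1)] nth_frag[OF assms(2)]
    by simp
  also have "\<dots> \<le> exp (- real L * D) powr c"
  proof (rule prod_le_powr_if_many_small)
    show "0 \<le> B i" "B i \<le> 1" for i
      unfolding B_def by (simp_all add: prod_nonneg prod_le_1 bhatt_nonneg bhatt_le_1)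
    show "B i \<le> exp (- real L * D)" if "i \<in> bad_frags \<Delta> \<delta> L M xs z" for i
      using prod_bhatt_le_exp[OF assms(3,5)] that unfolding B_def bad_frags_def by simp
  qed (use assms in \<open>auto simp: bad_frags_def\<close>)
  also have "\<dots> = exp (- (c * L * D))"
    by (simp add: powr_def)
  finally show ?thesis .
qed

lemma lik_le_sum_sqrt_lik_if_error:
  assumes len: "length xs = M * L" and "0 < M"
    and maxlik: "is_ML P L M xs ys \<sigma>" and error: "\<xi> \<le> Xi \<Delta> \<delta> L M xs \<sigma>"
  shows "lik P xs ys \<le> (\<Sum>z\<in>bad_arrangements \<Delta> \<delta> \<xi> L M xs. sqrt (lik P xs ys * lik P z ys))"
proof -
  define z\<^sub>0 where "z\<^sub>0 = arrange L M xs \<sigma>"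
  have perm: "\<sigma> permutes {..<M}" using maxlik by (simp add: is_ML_def)
  have "lik P xs ys \<le> lik P z\<^sub>0 ys"
    using maxlik permutes_id arrange_id[OF len] unfolding is_ML_def z\<^sub>0_def by metis
  have "lik P xs ys = sqrt (lik P xs ys * lik P xs ys)"
    using lik_nonneg by simp
  also have "\<dots> \<le> sqrt (lik P xs ys * lik P z\<^sub>0 ys)"
    using \<open>lik P xs ys \<le> lik P z\<^sub>0 ys\<close> lik_nonneg by (intro real_sqrt_le_mono mult_left_mono)
  also have "\<dots> \<le> (\<Sum>z\<in>bad_arrangements \<Delta> \<delta> \<xi> L M xs. sqrt (lik P xs ys * lik P z ys))"
  proof (rule member_le_sum)
    have "\<xi> * M \<le> card (bad_frags \<Delta> \<delta> L M xs z\<^sub>0)"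
      using error \<open>0 < M\<close> Xi_eq_card_bad_frags[OF len perm] by (simp add: z\<^sub>0_def le_divide_eq)
    then show "z\<^sub>0 \<in> bad_arrangements \<Delta> \<delta> \<xi> L M xs"
      using perm by (auto simp: z\<^sub>0_def arrangements_def bad_arrangements_def)
  qed (simp_all add: finite_bad_arrangements lik_nonneg)
  finally show ?thesis .
qed

lemma joint_ML_error_prob_le:
  fixes sel :: "'y list \<Rightarrow> nat \<Rightarrow> nat"
  assumes "0 < M" "0 < L" and len: "length xs = M * L"
    and D: "0 \<le> D" "ereal D \<le> dstar P \<Delta> \<delta>"
    and maxlik: "\<And>ys. length ys = M * L \<Longrightarrow> is_ML P L M xs ys (sel ys)"
  shows "(\<Sum>ys\<in>{ys. length ys = M * L}. (\<Prod>k<M * L. P (xs ! k, ys ! k)) *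
            (if \<xi> \<le> Xi \<Delta> \<delta> L M xs (sel ys) then 1 else 0))
         \<le> min (PXs xs) (exp (- (\<xi> * M * L * D)))"
proof -
  define Ys where "Ys = {ys::'y list. length ys = M * L}"
  define Z where "Z = bad_arrangements \<Delta> \<delta> \<xi> L M xs"
  define error where "error ys = (if \<xi> \<le> Xi \<Delta> \<delta> L M xs (sel ys) then 1 else (0::real))" for ys
  define E where "E = exp (- (\<xi> * M * L * D))"
  have "finite Ys"
    unfolding Ys_def using finite_lists_length_eq[of "UNIV :: 'y set"] by simp
  have "(\<Sum>ys\<in>Ys. lik P xs ys * error ys) \<le> (\<Sum>ys\<in>Ys. lik P xs ys)"
    by (intro sum_mono) (simp add: error_def lik_nonneg)
  also have "\<dots> = 1"
    using sum_lik[of xs] by (simp add: Ys_def len)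
  finally have le_1: "(\<Sum>ys\<in>Ys. lik P xs ys * error ys) \<le> 1" .
  have "(\<Sum>ys\<in>Ys. lik P xs ys * error ys) \<le> (\<Sum>ys\<in>Ys. \<Sum>z\<in>Z. sqrt (lik P xs ys * lik P z ys))"
    using lik_le_sum_sqrt_lik_if_error[OF len \<open>0 < M\<close> maxlik]
    by (intro sum_mono) (auto simp: error_def Ys_def Z_def lik_nonneg intro!: sum_nonneg)
  also have "\<dots> = (\<Sum>z\<in>Z. \<Sum>ys\<in>Ys. sqrt (lik P xs ys * lik P z ys))"
    by (rule sum.swap)
  also have "\<dots> \<le> (\<Sum>z\<in>Z. E)"
  proof (rule sum_mono)
    fix z assume "z \<in> Z"
    then show "(\<Sum>ys\<in>Ys. sqrt (lik P xs ys * lik P z ys)) \<le> E"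
      using sum_sqrt_lik_mult_le_exp[OF len length_arrangements[OF len] \<open>0 < L\<close> D, of z "\<xi> * M"]
      by (simp add: Ys_def Z_def bad_arrangements_def E_def mult.assoc)
  qed
  finally have le_card: "(\<Sum>ys\<in>Ys. lik P xs ys * error ys) \<le> real (card Z) * E" by simp
  have "(\<Sum>ys\<in>Ys. (\<Prod>k<M * L. P (xs ! k, ys ! k)) * error ys)
      = PXs xs * (\<Sum>ys\<in>Ys. lik P xs ys * error ys)"
    by (simp add: PXs_def lik_def len P_eq_PX_mult_Wc prod.distrib sum_distrib_left mult.assoc)
  also have "\<dots> \<le> min (PXs xs) E"
  proof (rule min.boundedI)
    show "PXs xs * (\<Sum>ys\<in>Ys. lik P xs ys * error ys) \<le> PXs xs"
      using le_1 PXs_pos by (simp add: mult_left_le)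
    have "PXs xs * (\<Sum>ys\<in>Ys. lik P xs ys * error ys) \<le> (real (card Z) * PXs xs) * E"
      using mult_left_mono[OF le_card less_imp_le[OF PXs_pos]] by (simp add: ac_simps)
    also have "\<dots> \<le> E"
      using card_mult_PXs_le_1[OF len, of Z] by (simp add: Z_def bad_arrangements_def E_def mult_left_le_one_le)
    finally show "PXs xs * (\<Sum>ys\<in>Ys. lik P xs ys * error ys) \<le> E" .
  qed
  finally show ?thesis unfolding Ys_def error_def E_def .
qed

lemma FP_nonneg: "0 \<le> FP P \<Delta> \<beta> \<delta> \<xi> sel M"
  unfolding FP_def Let_def
  by (rule sum_nonneg) (simp add: case_prod_unfold prod_nonneg P_nonneg)

lemma FP_le_exp:
  assumes "0 < M" "0 < fraglen \<beta> M" and D: "0 \<le> D" "ereal D \<le> dstar P \<Delta> \<delta>"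
    and "0 \<le> s" "s \<le> 1"
    and sel_ML: "\<And>xs ys. length xs = M * fraglen \<beta> M \<Longrightarrow> length ys = M * fraglen \<beta> M \<Longrightarrow>
                   is_ML P (fraglen \<beta> M) M xs ys (sel M xs ys)"
  shows "FP P \<Delta> \<beta> \<delta> \<xi> sel M
    \<le> exp (real (M * fraglen \<beta> M) * (ln (\<Sum>x\<in>UNIV. PX P x powr (1 - s)) - s * \<xi> * D))"
proof -
  define L where "L = fraglen \<beta> M"
  define N where "N = M * L"
  define S where "S = (\<Sum>x\<in>UNIV. PX P x powr (1 - s))"
  define E where "E = exp (- (\<xi> * M * L * D))"
  have "0 < S"
    unfolding S_def using PX_pos by (intro sum_pos) (auto simp: less_le)
  have "{(xs, ys). length xs = N \<and> length ys = N} = {xs::'x list. length xs = N} \<times> {ys::'y list. length ys = N}"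
    by auto
  then have "FP P \<Delta> \<beta> \<delta> \<xi> sel M = (\<Sum>xs\<in>{xs. length xs = N}. \<Sum>ys\<in>{ys. length ys = N}.
        (\<Prod>k<N. P (xs ! k, ys ! k)) * (if \<xi> \<le> Xi \<Delta> \<delta> L M xs (sel M xs ys) then 1 else 0))"
    unfolding FP_def Let_def L_def[symmetric] N_def[symmetric] by (simp add: sum.cartesian_product)
  also have "\<dots> \<le> (\<Sum>xs\<in>{xs. length xs = N}. min (PXs xs) E)"
    using joint_ML_error_prob_le[OF \<open>0 < M\<close> _ _ D] sel_ML assms(2)
    by (intro sum_mono) (simp add: N_def L_def E_def)
  also have "\<dots> \<le> (\<Sum>xs\<in>{xs. length xs = N}. PXs xs powr (1 - s) * E powr s)"
    using assms(5,6) PXs_pos by (intro sum_mono min_le_powr_mult_powr) (auto simp: E_def)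
  also have "\<dots> = S ^ N * E powr s"
    by (simp add: S_def sum_PXs_powr sum_distrib_right[symmetric])
  also have "\<dots> = exp (real N * (ln S - s * \<xi> * D))"
    using \<open>0 < S\<close>
    by (simp add: E_def N_def powr_def powr_realpow[symmetric] exp_add[symmetric] algebra_simps)
  finally show ?thesis unfolding N_def L_def S_def .
qed

lemma renyi_exponent_below_slope:
  assumes "entropyX P < K"
  shows "\<exists>s. 0 < s \<and> s < 1 \<and> ln (\<Sum>x\<in>UNIV. PX P x powr (1 - s)) < s * K"
proof -
  have "\<forall>\<^sub>F s in at_right 0. ln (\<Sum>x\<in>UNIV. PX P x powr (1 - s)) < s * K"
    using renyi_sum_has_derivative[of "PX P", OF PX_pos PX_sum] assms PX_pos
    by (intro eventually_less_slope_at_right) (simp_all add: entropyX_def PX_sum abs_of_pos)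
  moreover have "\<forall>\<^sub>F s in at_right 0. 0 < s \<and> s < (1::real)"
    by (rule eventually_at_rightI[of 0 1]) auto
  ultimately show ?thesis
    using eventually_happens'[OF trivial_limit_at_right_real] eventually_conj by blast
qed

end

lemma fraglen_pos: "0 < \<beta> \<Longrightarrow> 2 \<le> M \<Longrightarrow> 0 < fraglen \<beta> M"
  by (simp add: fraglen_def)

theorem theorem6:
  fixes P :: "'x::finite \<times> 'y::finite \<Rightarrow> real"
    and \<Delta> :: "'x \<Rightarrow> 'x \<Rightarrow> real"
    and \<beta> \<delta> \<xi> :: real
    and sel :: "nat \<Rightarrow> 'x list \<Rightarrow> 'y list \<Rightarrow> nat \<Rightarrow> nat"
  assumes P_nonneg: "\<And>z. 0 \<le> P z"
    and P_sum: "(\<Sum>z\<in>UNIV. P z) = 1"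
    and PX_pos: "\<And>x. 0 < PX P x"
    and Delta_nonneg: "\<And>a b. 0 \<le> \<Delta> a b"
    and beta_pos: "0 < \<beta>"
    and beta_lt: "\<beta> * entropyX P < 1"
    and delta_pos: "0 < \<delta>"
    and xi_pos: "0 < \<xi>"
    and xi_gt: "ereal (entropyX P) < ereal \<xi> * dstar P \<Delta> \<delta>"
    and sel_ML: "\<And>M xs ys. length xs = M * fraglen \<beta> M \<Longrightarrow> length ys = M * fraglen \<beta> M \<Longrightarrow>
                   is_ML P (fraglen \<beta> M) M xs ys (sel M xs ys)"
  shows "(\<lambda>M. FP P \<Delta> \<beta> \<delta> \<xi> sel M) \<longlonglongrightarrow> 0"
proof -
  interpret channel P using P_nonneg P_sum PX_pos by unfold_locales
  obtain D where D: "0 \<le> D" "ereal D \<le> dstar P \<Delta> \<delta>" and H_lt: "entropyX P < \<xi> * D"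
    using ereal_less_mult_obtains_real[OF xi_gt entropyX_nonneg xi_pos] .
  obtain s where s: "0 < s" "s < 1"
    and exponent: "ln (\<Sum>x\<in>UNIV. PX P x powr (1 - s)) < s * (\<xi> * D)"
    using renyi_exponent_below_slope[OF H_lt] by blast
  define c where "c = ln (\<Sum>x\<in>UNIV. PX P x powr (1 - s)) - s * \<xi> * D"
  have "c < 0" using exponent by (simp add: c_def mult.assoc)
  have FP_le: "FP P \<Delta> \<beta> \<delta> \<xi> sel M \<le> exp c ^ M" if "2 \<le> M" for M
  proof -
    have L: "0 < fraglen \<beta> M" using fraglen_pos[OF beta_pos that] .
    have "FP P \<Delta> \<beta> \<delta> \<xi> sel M \<le> exp (real (M * fraglen \<beta> M) * c)"
      unfolding c_def using that s sel_ML by (intro FP_le_exp[OF _ L D]) auto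
    also have "\<dots> \<le> exp (real M * c)"
    proof -
      have "real M \<le> real (M * fraglen \<beta> M)" using L by (intro of_nat_mono) simp
      then show ?thesis using mult_right_mono_neg[of _ _ c] \<open>c < 0\<close> by (simp del: of_nat_mult)
    qed
    also have "\<dots> = exp c ^ M" by (simp add: exp_of_nat_mult)
    finally show ?thesis .
  qed
  show ?thesis
    by (rule tendsto_sandwich[OF _ _ tendsto_const LIMSEQ_power_zero])
      (use FP_nonneg FP_le \<open>c < 0\<close> in \<open>auto simp: eventually_sequentially\<close>)
qed

end
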